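(* Let $c=\log(1/\epsilon)$. Then $\max_{w\in\Delta_K}\max_{Q\in(\Delta_{\mathcal X})^K}\sum_aw(a)D(Q_a\|\nu^i_a)\le c$ for every $i\in[m]$. Moreover, let $g':\mathbb R^m\to\mathbb R$ be bounded, Lipschitz, of compact support, with $g'(x)=g(x)$ for all $x\in[0,c]^m$, and let $V'$ be the unique viscosity solution of $\partial_tV'+H(\nabla_xV')=0$ on $\mathbb R^m\times[0,1)$, $V'(\cdot,1)=g'$. Then $V(x,t)=V'(x,t)$ whenever $t\in[0,1]$ and $0\le x_i\le c\,t$ for every $i\in[m]$.
   Context: $\mathcal X$ finite, $\Delta_{\mathcal X}$ the distributions on $\mathcal X$, $\Delta_K$ the simplex on $[K]$, $D$ the KL divergence; $m\ge2$ bandits $\nu^1,\dots,\nu^m$, $\nu^i=(\nu^i_a)_{a\in[K]}$, with $\nu^i_a(x)\ge\epsilon$ for all $i,a,x$, $\epsilon\in(0,1)$. $H(p)=\min_{Q\in(\Delta_{\mathcal X})^K}\max_{w\in\Delta_K}\sum_{i=1}^m\sum_aw(a)D(Q_a\|\nu^i_a)p_i$; $g(x)=\max_{j}\min_{i\ne j}x_i$; $V$ is the viscosity solution of $\partial_tV+H(\nabla_xV)=0$ on $\mathbb R^m\times[0,1)$, $V(\cdot,1)=g$. Viscosity solutions of such equations are the values of the zero-sum differential game with state dynamics $\dot x_i=\sum_aw(a)D(Q_a\|\nu^i_a)$, maximizer control $w\in\Delta_K$, minimizer control $Q\in(\Delta_{\mathcal X})^K$, and terminal payoff given by the terminal condition.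 *)

theory Defs
  imports "HOL-Analysis.Analysis"
begin

definition prob_simplex :: "('a::finite \<Rightarrow> real) set" where
  "prob_simplex = {w. (\<forall>a. 0 \<le> w a) \<and> sum w UNIV = 1}"

definition KL :: "('o::finite \<Rightarrow> real) \<Rightarrow> ('o \<Rightarrow> real) \<Rightarrow> real" where
  "KL q p = (\<Sum>x\<in>UNIV. if q x = 0 then 0 else q x * ln (q x / p x))"

text \<open>Hamiltonian H(p) = min_Q max_w sum_i sum_a w(a) D(Q_a || nu^i_a) p_i.
  Bandit i, arm a: nu i a, a distribution on outcomes.\<close>
definition Ham :: "('i::finite \<Rightarrow> 'a::finite \<Rightarrow> 'o::finite \<Rightarrow> real) \<Rightarrow> real^'i \<Rightarrow> real" where
  "Ham \<nu> p = (INF Q\<in>{Q. \<forall>a. Q a \<in> prob_simplex}. SUP w\<in>prob_simplex.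
      (\<Sum>i\<in>UNIV. \<Sum>a\<in>UNIV. w a * KL (Q a) (\<nu> i a) * p $ i))"

definition gpay :: "real^'i::finite \<Rightarrow> real" where
  "gpay x = Max (range (\<lambda>j. Min {x $ i | i. i \<noteq> j}))"

definition C1_test :: "((real^'i::finite) \<times> real \<Rightarrow> real) \<Rightarrow> ((real^'i) \<times> real \<Rightarrow> (real^'i) \<times> real \<Rightarrow> real) \<Rightarrow> bool" where
  "C1_test \<phi> \<phi>' \<longleftrightarrow> (\<forall>z. (\<phi> has_derivative \<phi>' z) (at z)) \<and>
     (\<forall>h. continuous_on UNIV (\<lambda>z. \<phi>' z h))"

definition grad_x :: "((real^'i::finite) \<times> real \<Rightarrow> (real^'i) \<times> real \<Rightarrow> real) \<Rightarrow> (real^'i) \<times> real \<Rightarrow> real^'i" where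
  "grad_x \<phi>' z = (\<chi> i. \<phi>' z (axis i 1, 0))"

definition deriv_t :: "((real^'i::finite) \<times> real \<Rightarrow> (real^'i) \<times> real \<Rightarrow> real) \<Rightarrow> (real^'i) \<times> real \<Rightarrow> real" where
  "deriv_t \<phi>' z = \<phi>' z (0, 1)"

text \<open>Viscosity solution (Crandall--Lions / Evans convention for terminal value problems) of
  dV/dt + H(grad_x V) = 0 on R^m x [0,1), V(.,1) = G, in the class of uniformly continuous
  functions on R^m x [0,1].\<close>
definition viscosity_solution ::
  "(real^'i::finite \<Rightarrow> real) \<Rightarrow> (real^'i \<Rightarrow> real) \<Rightarrow> (real^'i \<Rightarrow> real \<Rightarrow> real) \<Rightarrow> bool" where
  "viscosity_solution H G V \<longleftrightarrow>
     uniformly_continuous_on (UNIV \<times> {0..1}) (\<lambda>(x,t). V x t) \<and>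
     (\<forall>x. V x 1 = G x) \<and>
     (\<forall>\<phi> \<phi>' x0 t0. C1_test \<phi> \<phi>' \<and> 0 < t0 \<and> t0 < 1 \<and>
        (\<exists>r>0. \<forall>x t. 0 < t \<and> t < 1 \<and> dist (x,t) (x0,t0) < r \<longrightarrow>
            V x t - \<phi> (x,t) \<le> V x0 t0 - \<phi> (x0,t0))
        \<longrightarrow> deriv_t \<phi>' (x0,t0) + H (grad_x \<phi>' (x0,t0)) \<ge> 0) \<and>
     (\<forall>\<phi> \<phi>' x0 t0. C1_test \<phi> \<phi>' \<and> 0 < t0 \<and> t0 < 1 \<and>
        (\<exists>r>0. \<forall>x t. 0 < t \<and> t < 1 \<and> dist (x,t) (x0,t0) < r \<longrightarrow>
            V x t - \<phi> (x,t) \<ge> V x0 t0 - \<phi> (x0,t0))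
        \<longrightarrow> deriv_t \<phi>' (x0,t0) + H (grad_x \<phi>' (x0,t0)) \<le> 0)"

end

(*
  Since every nu^i_a is bounded below by epsilon, each D(Q_a || nu^i_a) is at most
  c = ln (1 / epsilon), and so is every average over arms. Hence H(p) is an inf-sup of linear
  forms with coefficients in [0, c]: it is monotone in p and grows by at most c per unit increase
  of each coordinate. In game terms the state moves with coordinatewise speed in [0, c], so from
  the cone 0 <= x_i <= c t only the terminal data on [0, c]^m are seen, where g' = g.

  Analytically this is a comparison principle on the cone, proved by doubling variables: maximise
  u(x,t) - v(y,s) - |(x,t) - (y,s)|^2 / (2 delta) - A exp (-k t) - M P(x,t), where
  P(x,t) = sum_i ((x_i - c t)^+)^2 + ((-x_i)^+)^2 penalises leaving the cone. The barrier keeps the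
  maximiser away from t = 0 and the penalty keeps it near the cone, so near t = 1 only points of
  [0, c]^m, where u <= v, are involved. At an interior maximiser the viscosity inequalities for u
  and v contradict each other, because the time derivative -c M sum_i 2 (x_i - c t)^+ of the
  penalty exactly compensates the increase of H caused by its spatial gradient.
*)

theory Submission
  imports Defs
begin

section \<open>Bounds on the Kullback-Leibler divergence\<close>

lemma prob_simplex_nonneg: "q \<in> prob_simplex \<Longrightarrow> 0 \<le> q x"
  unfolding prob_simplex_def by blast

lemma prob_simplex_le_1:
  assumes q: "q \<in> prob_simplex" shows "q x \<le> 1"
proof -
  have "q x \<le> sum q UNIV"
    using q by (intro member_le_sum) (auto simp: prob_simplex_nonneg)
  with q show ?thesis by (simp add: prob_simplex_def)
qed

lemma uniform_in_prob_simplex: "(\<lambda>_. 1 / real CARD('a::finite)) \<in> (prob_simplex :: ('a \<Rightarrow> real) set)"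
  unfolding prob_simplex_def by simp

lemma prob_simplex_sum_bounds:
  assumes "w \<in> prob_simplex" and "\<And>a. 0 \<le> f a" and "\<And>a. f a \<le> c"
  shows "0 \<le> (\<Sum>a\<in>UNIV. w a * f a)" and "(\<Sum>a\<in>UNIV. w a * f a) \<le> c"
proof -
  show "0 \<le> (\<Sum>a\<in>UNIV. w a * f a)"
    using assms by (simp add: sum_nonneg prob_simplex_nonneg)
  have "(\<Sum>a\<in>UNIV. w a * f a) \<le> (\<Sum>a\<in>UNIV. w a * c)"
    using assms by (intro sum_mono mult_left_mono) (auto simp: prob_simplex_nonneg)
  also have "\<dots> = c"
    using assms(1) by (simp add: prob_simplex_def flip: sum_distrib_right)
  finally show "(\<Sum>a\<in>UNIV. w a * f a) \<le> c" .
qed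

lemma KL_nonneg:
  assumes q: "q \<in> prob_simplex" and p: "p \<in> prob_simplex" and p_pos: "\<And>x. 0 < p x"
  shows "0 \<le> KL q p"
proof -
  have "q x - p x \<le> (if q x = 0 then 0 else q x * ln (q x / p x))" for x
  proof (cases "q x = 0")
    case False
    with q have qx: "0 < q x" by (simp add: order_less_le prob_simplex_nonneg)
    have "ln (p x / q x) \<le> p x / q x - 1"
      using p_pos[of x] qx by (intro ln_le_minus_one) simp
    then have "q x * (1 - p x / q x) \<le> q x * ln (q x / p x)"
      using p_pos[of x] qx by (intro mult_left_mono) (auto simp: ln_div)
    moreover have "q x * (1 - p x / q x) = q x - p x"
      using qx by (simp add: field_simps)
    ultimately show ?thesis using False by simp
  qed (use p_pos in \<open>simp add: less_imp_le\<close>)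
  then have "(\<Sum>x\<in>UNIV. q x - p x) \<le> KL q p"
    unfolding KL_def by (intro sum_mono)
  with p q show ?thesis by (simp add: sum_subtractf prob_simplex_def)
qed

lemma KL_le_ln_inverse:
  assumes q: "q \<in> prob_simplex" and \<epsilon>: "0 < \<epsilon>" and p_ge: "\<And>x. \<epsilon> \<le> p x"
  shows "KL q p \<le> ln (1 / \<epsilon>)"
proof -
  have "(if q x = 0 then 0 else q x * ln (q x / p x)) \<le> q x * ln (1 / \<epsilon>)" for x
  proof (cases "q x = 0")
    case False
    with q have qx: "0 < q x" by (simp add: order_less_le prob_simplex_nonneg)
    have "ln (q x / p x) = ln (q x) - ln (p x)"
      using qx \<epsilon> p_ge[of x] by (simp add: ln_div)
    also have "\<dots> \<le> 0 - ln \<epsilon>"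
      using qx \<epsilon> p_ge[of x] prob_simplex_le_1[OF q, of x] by (intro diff_mono) auto
    also have "\<dots> = ln (1 / \<epsilon>)"
      using \<epsilon> by (simp add: ln_div)
    finally show ?thesis
      using False qx by (simp add: mult_left_mono)
  qed (use \<epsilon> in simp)
  then have "KL q p \<le> (\<Sum>x\<in>UNIV. q x * ln (1 / \<epsilon>))"
    unfolding KL_def by (intro sum_mono)
  with q show ?thesis by (simp add: prob_simplex_def flip: sum_distrib_right)
qed

lemma weighted_KL_bounds:
  assumes \<nu>: "\<forall>i a. \<nu> i a \<in> prob_simplex" and \<epsilon>: "0 < \<epsilon>" and \<nu>_ge: "\<forall>i a x. \<epsilon> \<le> \<nu> i a x"
    and w: "w \<in> prob_simplex" and Q: "\<forall>a. Q a \<in> prob_simplex"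
  shows "0 \<le> (\<Sum>a\<in>UNIV. w a * KL (Q a) (\<nu> i a))"
    and "(\<Sum>a\<in>UNIV. w a * KL (Q a) (\<nu> i a)) \<le> ln (1 / \<epsilon>)"
proof -
  have nonneg: "0 \<le> KL (Q a) (\<nu> i a)" for a
    using \<nu> Q \<nu>_ge \<epsilon> by (intro KL_nonneg) (auto intro: less_le_trans)
  have le: "KL (Q a) (\<nu> i a) \<le> ln (1 / \<epsilon>)" for a
    using Q \<nu>_ge \<epsilon> by (intro KL_le_ln_inverse) auto
  show "0 \<le> (\<Sum>a\<in>UNIV. w a * KL (Q a) (\<nu> i a))"
    and "(\<Sum>a\<in>UNIV. w a * KL (Q a) (\<nu> i a)) \<le> ln (1 / \<epsilon>)"
    by (rule prob_simplex_sum_bounds[OF w nonneg le])+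
qed

section \<open>Finite speed of propagation of the Hamiltonian\<close>

(* The only property of the Hamiltonian used by the comparison principle. *)
definition propagation_speed_le :: "real \<Rightarrow> (real^'i::finite \<Rightarrow> real) \<Rightarrow> bool" where
  "propagation_speed_le c H \<longleftrightarrow>
     (\<forall>a b r. (\<forall>i. a $ i \<le> b $ i + r i \<and> 0 \<le> r i) \<longrightarrow> H a \<le> H b + c * (\<Sum>i\<in>UNIV. r i))"

lemma INF_SUP_le_add:
  fixes f g :: "'x \<Rightarrow> 'y \<Rightarrow> real"
  assumes X: "X \<noteq> {}" and Y: "Y \<noteq> {}"
    and f_bound: "\<And>x y. x \<in> X \<Longrightarrow> y \<in> Y \<Longrightarrow> \<bar>f x y\<bar> \<le> Bf"
    and g_bound: "\<And>x y. x \<in> X \<Longrightarrow> y \<in> Y \<Longrightarrow> \<bar>g x y\<bar> \<le> Bg"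
    and le: "\<And>x y. x \<in> X \<Longrightarrow> y \<in> Y \<Longrightarrow> f x y \<le> g x y + C"
  shows "(INF x\<in>X. SUP y\<in>Y. f x y) \<le> (INF x\<in>X. SUP y\<in>Y. g x y) + C"
proof -
  have bdd_f: "bdd_above (f x ` Y)" and bdd_g: "bdd_above (g x ` Y)" if "x \<in> X" for x
    using f_bound g_bound that by (meson abs_le_D1 bdd_aboveI2)+
  have SUP_le: "(SUP y\<in>Y. f x y) \<le> (SUP y\<in>Y. g x y) + C" if x: "x \<in> X" for x
  proof (rule cSUP_least[OF Y])
    fix y assume y: "y \<in> Y"
    have "g x y \<le> (SUP y\<in>Y. g x y)"
      using y bdd_g[OF x] by (rule cSUP_upper)
    with le[OF x y] show "f x y \<le> (SUP y\<in>Y. g x y) + C" by linarith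
  qed
  have "bdd_below ((\<lambda>x. SUP y\<in>Y. f x y) ` X)"
  proof (rule bdd_belowI2)
    fix x assume x: "x \<in> X"
    obtain y where y: "y \<in> Y" using Y by blast
    have "f x y \<le> (SUP y\<in>Y. f x y)"
      using y bdd_f[OF x] by (rule cSUP_upper)
    with f_bound[OF x y] show "- Bf \<le> (SUP y\<in>Y. f x y)" by linarith
  qed
  then have "(INF x\<in>X. SUP y\<in>Y. f x y) - C \<le> (SUP y\<in>Y. g x y)" if "x \<in> X" for x
    using cINF_lower[of _ X x] SUP_le[OF that] that by fastforce
  then have "(INF x\<in>X. SUP y\<in>Y. f x y) - C \<le> (INF x\<in>X. SUP y\<in>Y. g x y)"
    by (intro cINF_greatest[OF X])
  then show ?thesis by linarith
qed

lemma abs_sum_mult_le: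
  fixes S :: "'i::finite \<Rightarrow> real"
  assumes "\<And>i. 0 \<le> S i" and "\<And>i. S i \<le> c"
  shows "\<bar>\<Sum>i\<in>UNIV. S i * p $ i\<bar> \<le> c * (\<Sum>i\<in>UNIV. \<bar>p $ i\<bar>)"
proof -
  have "\<bar>S i * p $ i\<bar> \<le> c * \<bar>p $ i\<bar>" for i
    using assms(1,2)[of i] by (simp add: abs_mult abs_of_nonneg mult_right_mono)
  then show ?thesis
    by (simp add: sum_distrib_left order_trans[OF sum_abs sum_mono])
qed

lemma sum_mult_le_add_shift:
  fixes S :: "'i::finite \<Rightarrow> real"
  assumes "\<And>i. 0 \<le> S i" and "\<And>i. S i \<le> c"
    and "\<And>i. a $ i \<le> b $ i + r i" and "\<And>i. 0 \<le> r i"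
  shows "(\<Sum>i\<in>UNIV. S i * a $ i) \<le> (\<Sum>i\<in>UNIV. S i * b $ i) + c * (\<Sum>i\<in>UNIV. r i)"
proof -
  have "S i * a $ i \<le> S i * b $ i + c * r i" for i
  proof -
    have "S i * a $ i \<le> S i * (b $ i + r i)"
      using assms(1,3)[of i] by (simp add: mult_left_mono)
    also have "\<dots> \<le> S i * b $ i + c * r i"
      using assms(2,4)[of i] by (simp add: distrib_left mult_right_mono)
    finally show ?thesis .
  qed
  then show ?thesis
    by (simp add: sum_distrib_left flip: sum.distrib) (intro sum_mono)
qed

lemma propagation_speed_le_INF_SUP:
  fixes S :: "'x \<Rightarrow> 'y \<Rightarrow> 'i::finite \<Rightarrow> real"
  assumes X: "X \<noteq> {}" and Y: "Y \<noteq> {}"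
    and S: "\<And>x y i. x \<in> X \<Longrightarrow> y \<in> Y \<Longrightarrow> 0 \<le> S x y i \<and> S x y i \<le> c"
  shows "propagation_speed_le c (\<lambda>p. INF x\<in>X. SUP y\<in>Y. \<Sum>i\<in>UNIV. S x y i * p $ i)"
  unfolding propagation_speed_le_def
proof (intro allI impI)
  fix a b :: "real^'i" and r :: "'i \<Rightarrow> real"
  assume "\<forall>i. a $ i \<le> b $ i + r i \<and> 0 \<le> r i"
  with S show "(INF x\<in>X. SUP y\<in>Y. \<Sum>i\<in>UNIV. S x y i * a $ i)
      \<le> (INF x\<in>X. SUP y\<in>Y. \<Sum>i\<in>UNIV. S x y i * b $ i) + c * (\<Sum>i\<in>UNIV. r i)"
    by (intro INF_SUP_le_add[OF X Y, where Bf = "c * (\<Sum>i\<in>UNIV. \<bar>a $ i\<bar>)"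
          and Bg = "c * (\<Sum>i\<in>UNIV. \<bar>b $ i\<bar>)"] abs_sum_mult_le sum_mult_le_add_shift) auto
qed

lemma propagation_speed_le_Ham:
  fixes \<nu> :: "'i::finite \<Rightarrow> 'a::finite \<Rightarrow> 'o::finite \<Rightarrow> real"
  assumes \<nu>: "\<forall>i a. \<nu> i a \<in> prob_simplex" and \<epsilon>: "0 < \<epsilon>" and \<nu>_ge: "\<forall>i a x. \<epsilon> \<le> \<nu> i a x"
  shows "propagation_speed_le (ln (1 / \<epsilon>)) (Ham \<nu>)"
proof -
  let ?S = "\<lambda>Q w i. \<Sum>a\<in>UNIV. w a * KL (Q a) (\<nu> i a)"
  have "Ham \<nu> = (\<lambda>p. INF Q\<in>{Q. \<forall>a. Q a \<in> prob_simplex}. SUP w\<in>prob_simplex.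
      \<Sum>i\<in>UNIV. ?S Q w i * p $ i)"
    unfolding Ham_def by (simp only: sum_distrib_right)
  moreover have "(\<lambda>_ _. 1 / real CARD('o)) \<in> {Q :: 'a \<Rightarrow> 'o \<Rightarrow> real. \<forall>a. Q a \<in> prob_simplex}"
    using uniform_in_prob_simplex[where 'a='o] by simp
  then have "{Q :: 'a \<Rightarrow> 'o \<Rightarrow> real. \<forall>a. Q a \<in> prob_simplex} \<noteq> {}" by (metis empty_iff)
  moreover have "(prob_simplex :: ('a \<Rightarrow> real) set) \<noteq> {}"
    using uniform_in_prob_simplex[where 'a='a] by blast
  ultimately show ?thesis
    using weighted_KL_bounds[OF \<nu> \<epsilon> \<nu>_ge]
    by (simp only:) (rule propagation_speed_le_INF_SUP; blast)
qed

definition viscosity_subsolution :: "(real^'i::finite \<Rightarrow> real) \<Rightarrow> (real^'i \<Rightarrow> real \<Rightarrow> real) \<Rightarrow> bool" where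
  "viscosity_subsolution H V \<longleftrightarrow>
     (\<forall>\<phi> \<phi>' x0 t0. C1_test \<phi> \<phi>' \<and> 0 < t0 \<and> t0 < 1 \<and>
        (\<exists>r>0. \<forall>x t. 0 < t \<and> t < 1 \<and> dist (x,t) (x0,t0) < r \<longrightarrow>
            V x t - \<phi> (x,t) \<le> V x0 t0 - \<phi> (x0,t0))
        \<longrightarrow> deriv_t \<phi>' (x0,t0) + H (grad_x \<phi>' (x0,t0)) \<ge> 0)"

definition viscosity_supersolution :: "(real^'i::finite \<Rightarrow> real) \<Rightarrow> (real^'i \<Rightarrow> real \<Rightarrow> real) \<Rightarrow> bool" where
  "viscosity_supersolution H V \<longleftrightarrow>
     (\<forall>\<phi> \<phi>' x0 t0. C1_test \<phi> \<phi>' \<and> 0 < t0 \<and> t0 < 1 \<and>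
        (\<exists>r>0. \<forall>x t. 0 < t \<and> t < 1 \<and> dist (x,t) (x0,t0) < r \<longrightarrow>
            V x t - \<phi> (x,t) \<ge> V x0 t0 - \<phi> (x0,t0))
        \<longrightarrow> deriv_t \<phi>' (x0,t0) + H (grad_x \<phi>' (x0,t0)) \<le> 0)"

lemma viscosity_solution_iff:
  "viscosity_solution H G V \<longleftrightarrow>
     uniformly_continuous_on (UNIV \<times> {0..1}) (\<lambda>(x,t). V x t) \<and> (\<forall>x. V x 1 = G x) \<and>
     viscosity_subsolution H V \<and> viscosity_supersolution H V"
  unfolding viscosity_solution_def viscosity_subsolution_def viscosity_supersolution_def ..

lemma C1_test_add:
  "C1_test \<phi> \<phi>' \<Longrightarrow> C1_test \<psi> \<psi>' \<Longrightarrow> C1_test (\<lambda>z. \<phi> z + \<psi> z) (\<lambda>z h. \<phi>' z h + \<psi>' z h)"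
  unfolding C1_test_def by (auto intro: has_derivative_add continuous_on_add)

lemma C1_test_cmult:
  "C1_test \<phi> \<phi>' \<Longrightarrow> C1_test (\<lambda>z. a * \<phi> z) (\<lambda>z h. a * \<phi>' z h)"
  unfolding C1_test_def by (auto intro: has_derivative_mult_right continuous_on_mult_left)

lemma C1_test_uminus:
  "C1_test \<phi> \<phi>' \<Longrightarrow> C1_test (\<lambda>z. - \<phi> z) (\<lambda>z h. - \<phi>' z h)"
  unfolding C1_test_def by (auto intro: has_derivative_minus continuous_on_minus)

lemma C1_test_sq_dist:
  fixes w :: "(real^'i::finite) \<times> real"
  assumes "\<delta> \<noteq> 0"
  shows "C1_test (\<lambda>z. (dist z w)\<^sup>2 / (2 * \<delta>)) (\<lambda>z h. inner h (z - w) / \<delta>)"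
  unfolding C1_test_def dist_norm power2_norm_eq_inner
proof (intro conjI allI)
  fix z :: "(real^'i) \<times> real"
  show "((\<lambda>z. inner (z - w) (z - w) / (2 * \<delta>)) has_derivative (\<lambda>h. inner h (z - w) / \<delta>)) (at z)"
    using assms by (auto intro!: derivative_eq_intros simp: inner_commute field_simps)
qed (use assms in \<open>auto intro!: continuous_intros\<close>)

lemma C1_test_exp_barrier:
  "C1_test (\<lambda>z::(real^'i::finite) \<times> real. A * exp (- (k * snd z)))
     (\<lambda>z h. - (k * A * exp (- (k * snd z)) * snd h))"
  unfolding C1_test_def
  by (auto intro!: derivative_eq_intros continuous_intros simp: field_simps)

section \<open>The cone penalty\<close>

definition hinge_sq :: "real \<Rightarrow> real" where
  "hinge_sq r = (max r 0)\<^sup>2"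

lemma hinge_sq_has_real_derivative: "(hinge_sq has_real_derivative 2 * max r 0) (at r)"
proof -
  consider "0 < r" | "r < 0" | "r = 0" by linarith
  then show ?thesis
  proof cases
    case 1
    have "((\<lambda>y. y\<^sup>2) has_real_derivative 2 * max r 0) (at r)"
      using 1 by (auto intro!: derivative_eq_intros)
    then show ?thesis
      by (rule has_field_derivative_transform_within_open[where S="{0<..}"])
         (use 1 in \<open>auto simp: hinge_sq_def\<close>)
  next
    case 2
    have "((\<lambda>y. 0) has_real_derivative 2 * max r 0) (at r)"
      using 2 by simp
    then show ?thesis
      by (rule has_field_derivative_transform_within_open[where S="{..<0}"])
         (use 2 in \<open>auto simp: hinge_sq_def\<close>)
  next
    case 3
    have "((\<lambda>y. (hinge_sq y - hinge_sq 0) / (y - 0)) \<longlongrightarrow> 0) (at 0)"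
    proof (rule Lim_null_comparison)
      show "\<forall>\<^sub>F y in at 0. norm ((hinge_sq y - hinge_sq 0) / (y - 0)) \<le> norm y"
      proof (intro always_eventually allI)
        fix y :: real
        show "norm ((hinge_sq y - hinge_sq 0) / (y - 0)) \<le> norm y"
          by (cases "0 < y") (auto simp: hinge_sq_def power2_eq_square abs_mult)
      qed
    qed (auto intro!: tendsto_eq_intros)
    with 3 show ?thesis
      unfolding has_field_derivative_iff by simp
  qed
qed

lemma has_derivative_hinge_sq [derivative_intros]:
  "(g has_derivative g') (at x within S) \<Longrightarrow>
     ((\<lambda>x. hinge_sq (g x)) has_derivative (\<lambda>h. g' h * (2 * max (g x) 0))) (at x within S)"
  by (rule DERIV_compose_FDERIV[OF hinge_sq_has_real_derivative])

definition cone_penalty :: "real \<Rightarrow> real^'i::finite \<Rightarrow> real \<Rightarrow> real" where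
  "cone_penalty c x t = (\<Sum>i\<in>UNIV. hinge_sq (x $ i - c * t) + hinge_sq (- x $ i))"

lemma C1_test_cone_penalty:
  "C1_test (\<lambda>z. cone_penalty c (fst z) (snd z))
     (\<lambda>z h. \<Sum>i\<in>UNIV. 2 * max (fst z $ i - c * snd z) 0 * (fst h $ i - c * snd h)
                      - 2 * max (- fst z $ i) 0 * fst h $ i)"
  unfolding C1_test_def cone_penalty_def
proof (intro conjI allI)
  fix z :: "(real^'i) \<times> real"
  show "((\<lambda>z. \<Sum>i\<in>UNIV. hinge_sq (fst z $ i - c * snd z) + hinge_sq (- fst z $ i)) has_derivative
      (\<lambda>h. \<Sum>i\<in>UNIV. 2 * max (fst z $ i - c * snd z) 0 * (fst h $ i - c * snd h)
                      - 2 * max (- fst z $ i) 0 * fst h $ i)) (at z)"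
    by (auto intro!: derivative_eq_intros bounded_linear.has_derivative[OF bounded_linear_vec_nth]
        sum.cong simp: algebra_simps)
qed (intro continuous_intros)

lemma grad_x_nth: "grad_x \<phi>' z $ i = \<phi>' z (axis i 1, 0)"
  by (simp add: grad_x_def)

lemma sum_mult_axis: "(\<Sum>j\<in>UNIV. f j * axis i (1::real) $ j) = f i"
  by (simp add: axis_def if_distrib[of "\<lambda>x. _ * x"] cong: if_cong)

lemma cone_penalty_nonneg: "0 \<le> cone_penalty c x t"
  unfolding cone_penalty_def hinge_sq_def by (simp add: sum_nonneg)

lemma cone_penalty_eq_0: "(\<And>i. 0 \<le> x $ i \<and> x $ i \<le> c * t) \<Longrightarrow> cone_penalty c x t = 0"
  unfolding cone_penalty_def hinge_sq_def by simp

lemma hinge_sq_le_cone_penalty: "hinge_sq (x $ i - c * t) + hinge_sq (- x $ i) \<le> cone_penalty c x t"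
  unfolding cone_penalty_def
  by (rule member_le_sum[of i UNIV "\<lambda>i. hinge_sq (x $ i - c * t) + hinge_sq (- x $ i)"])
     (auto simp: hinge_sq_def)

lemma sq_le_hinge_sq: "0 \<le> a \<Longrightarrow> a \<le> r \<Longrightarrow> a\<^sup>2 \<le> hinge_sq r"
  unfolding hinge_sq_def by (intro power_mono) auto

lemma cone_penalty_lt_sq_imp_near_cone:
  assumes "cone_penalty c x t < a\<^sup>2" and "0 \<le> a"
  shows "- a < x $ i \<and> x $ i < c * t + a"
proof (rule ccontr)
  assume "\<not> (- a < x $ i \<and> x $ i < c * t + a)"
  then have "a\<^sup>2 \<le> hinge_sq (x $ i - c * t) + hinge_sq (- x $ i)"
    using assms(2) sq_le_hinge_sq[of a "x $ i - c * t"] sq_le_hinge_sq[of a "- x $ i"]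
    by (auto simp: hinge_sq_def add_increasing add_increasing2)
  with hinge_sq_le_cone_penalty[of x i c t] assms(1) show False by linarith
qed

lemma cone_penalty_ge_sq_dist_box:
  assumes "0 \<le> c" and "t \<le> 1"
  obtains p where "\<And>i. 0 \<le> p $ i \<and> p $ i \<le> c" and "(dist x p)\<^sup>2 \<le> cone_penalty c x t"
proof
  define p where "p = (\<chi> i. max 0 (min c (x $ i)))"
  show "0 \<le> p $ i \<and> p $ i \<le> c" for i
    using assms(1) by (simp add: p_def)
  have "(x $ i - p $ i)\<^sup>2 \<le> hinge_sq (x $ i - c * t) + hinge_sq (- x $ i)" for i
  proof -
    have "c * t \<le> c" using assms by (simp add: mult_left_le)
    then have "(x $ i - p $ i)\<^sup>2 \<le> hinge_sq (x $ i - c * t) \<or> (x $ i - p $ i)\<^sup>2 \<le> hinge_sq (- x $ i)"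
      using assms(1) by (auto simp: p_def hinge_sq_def max_def min_def intro!: power_mono)
    then show ?thesis by (auto simp: hinge_sq_def add_increasing add_increasing2)
  qed
  then have "(\<Sum>i\<in>UNIV. (x $ i - p $ i)\<^sup>2) \<le> cone_penalty c x t"
    unfolding cone_penalty_def by (intro sum_mono)
  moreover have "(dist x p)\<^sup>2 = (\<Sum>i\<in>UNIV. (x $ i - p $ i)\<^sup>2)"
    unfolding dist_norm power2_norm_eq_inner inner_vec_def by (simp add: power2_eq_square)
  ultimately show "(dist x p)\<^sup>2 \<le> cone_penalty c x t" by simp
qed

section \<open>Doubling of variables\<close>

lemma viscosity_doubling_contradiction:
  fixes u v :: "real^'i::finite \<Rightarrow> real \<Rightarrow> real" and xh yh :: "real^'i"
    and th sh c \<delta> k A M r :: real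
  defines "\<phi> \<equiv> \<lambda>z. (dist z (yh, sh))\<^sup>2 / (2 * \<delta>) + A * exp (- (k * snd z))
      + M * cone_penalty c (fst z) (snd z)"
    and "\<psi> \<equiv> \<lambda>z. - ((dist z (xh, th))\<^sup>2 / (2 * \<delta>))"
  assumes H: "propagation_speed_le c H"
    and sub: "viscosity_subsolution H u" and super: "viscosity_supersolution H v"
    and \<delta>: "0 < \<delta>" and k: "0 < k" and A: "0 < A" and M: "0 \<le> M"
    and th: "0 < th" "th < 1" and sh: "0 < sh" "sh < 1"
    and r: "0 < r"
    and u_max: "\<And>x t. 0 < t \<Longrightarrow> t < 1 \<Longrightarrow> dist (x, t) (xh, th) < r \<Longrightarrow>
        u x t - \<phi> (x, t) \<le> u xh th - \<phi> (xh, th)"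
    and v_min: "\<And>y s. 0 < s \<Longrightarrow> s < 1 \<Longrightarrow> dist (y, s) (yh, sh) < r \<Longrightarrow>
        v y s - \<psi> (y, s) \<ge> v yh sh - \<psi> (yh, sh)"
  shows False
proof -
  define \<phi>' where "\<phi>' = (\<lambda>z h. inner h (z - (yh, sh)) / \<delta> + - (k * A * exp (- (k * snd z)) * snd h)
      + M * (\<Sum>i\<in>UNIV. 2 * max (fst z $ i - c * snd z) 0 * (fst h $ i - c * snd h)
                        - 2 * max (- fst z $ i) 0 * fst h $ i))"
  define \<psi>' where "\<psi>' = (\<lambda>z h. - (inner h (z - (xh, th)) / \<delta>))"
  have "C1_test \<phi> \<phi>'"
    unfolding \<phi>_def \<phi>'_def using \<delta>
    by (intro C1_test_add C1_test_sq_dist C1_test_exp_barrier C1_test_cmult C1_test_cone_penalty) simp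
  with sub u_max r th have sub_ineq: "0 \<le> deriv_t \<phi>' (xh, th) + H (grad_x \<phi>' (xh, th))"
    unfolding viscosity_subsolution_def by blast
  have "C1_test \<psi> \<psi>'"
    unfolding \<psi>_def \<psi>'_def using \<delta> by (intro C1_test_uminus C1_test_sq_dist) simp
  with super v_min r sh have super_ineq: "deriv_t \<psi>' (yh, sh) + H (grad_x \<psi>' (yh, sh)) \<le> 0"
    unfolding viscosity_supersolution_def by blast
  define incr where "incr i = M * (2 * max (xh $ i - c * th) 0)" for i
  have grad_\<phi>: "grad_x \<phi>' (xh, th) $ i
      = (xh $ i - yh $ i) / \<delta> + M * (2 * max (xh $ i - c * th) 0 - 2 * max (- xh $ i) 0)" for i
    using sum_mult_axis[of "\<lambda>j. 2 * max (xh $ j - c * th) 0 - 2 * max (- xh $ j) 0" i]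
    by (simp add: grad_x_nth \<phi>'_def inner_axis' left_diff_distrib sum_subtractf)
  have grad_\<psi>: "grad_x \<psi>' (yh, sh) $ i = (xh $ i - yh $ i) / \<delta>" for i
    using \<delta> by (simp add: grad_x_nth \<psi>'_def inner_axis' field_simps)
  have "grad_x \<phi>' (xh, th) $ i \<le> grad_x \<psi>' (yh, sh) $ i + incr i \<and> 0 \<le> incr i" for i
    using M unfolding grad_\<phi> grad_\<psi> incr_def by (simp add: algebra_simps)
  (* The time derivative of the cone penalty pays for the increase of H caused by its gradient. *)
  with H have H_le: "H (grad_x \<phi>' (xh, th)) \<le> H (grad_x \<psi>' (yh, sh)) + c * (\<Sum>i\<in>UNIV. incr i)"
    unfolding propagation_speed_le_def by blast
  have "deriv_t \<phi>' (xh, th) = (th - sh) / \<delta> - k * A * exp (- (k * th)) - c * (\<Sum>i\<in>UNIV. incr i)"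
    by (simp add: deriv_t_def \<phi>'_def incr_def sum_distrib_left sum_negf algebra_simps)
  moreover have "deriv_t \<psi>' (yh, sh) = (th - sh) / \<delta>"
    using \<delta> by (simp add: deriv_t_def \<psi>'_def field_simps)
  moreover have "0 < k * A * exp (- (k * th))"
    using k A by simp
  ultimately show False
    using sub_ineq super_ineq H_le by linarith
qed

lemma dist_Pair_le_add:
  fixes a c :: "'a::real_normed_vector" and b d :: "'b::real_normed_vector"
  shows "dist (a, b) (c, d) \<le> dist a c + dist b d"
  using norm_Pair_le[of "a - c" "b - d"] by (simp add: dist_norm)

lemma abs_nth_diff_le_dist_Pair: "\<bar>x $ i - y $ i\<bar> \<le> dist (x, t) (y, s)"
  using component_le_norm_cart[of "x - y" i] dist_fst_le[of "(x, t)" "(y, s)"]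
  by (simp add: dist_norm)

definition slab :: "real \<Rightarrow> ((real^'i::finite) \<times> real) set" where
  "slab R = cbox (- vec R) (vec R) \<times> {0..1}"

lemma mem_slab: "(x, t) \<in> slab R \<longleftrightarrow> (\<forall>i. \<bar>x $ i\<bar> \<le> R) \<and> 0 \<le> t \<and> t \<le> 1"
  by (auto simp: slab_def mem_box_cart abs_le_iff minus_le_iff)

lemma compact_slab: "compact (slab R)"
  unfolding slab_def by (intro compact_Times compact_cbox compact_Icc)

(* B and beta will be a bound and a modulus of continuity (for gap / 8) of u and v near the
   cone; m and M tune the cone penalty, A, k and theta the barrier at t = 0, eta and delta the
   doubling. *)
locale doubling_parameters =
  fixes B \<beta> gap t0 m M A k \<theta> \<eta> \<delta> :: real
  assumes m: "0 < m" "m \<le> 1/2" "3 * m \<le> \<beta>"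
    and M: "0 \<le> M" "2 * B < M * m\<^sup>2"
    and barrier: "0 < A" "0 < k" "A * exp (- (k * t0)) < gap / 2"
      "\<And>t. t \<le> \<theta> \<Longrightarrow> 2 * B \<le> A * exp (- (k * t))"
    and \<eta>: "0 < \<eta>" "\<eta> \<le> 1/4" "2 * \<eta> \<le> \<theta>" "4 * \<eta> \<le> \<beta>"
    and \<delta>: "0 < \<delta>" "8 * B * \<delta> \<le> \<eta>\<^sup>2"

lemma doubling_parameters_exist:
  assumes B: "0 < B" and \<beta>: "0 < \<beta>" and gap: "0 < gap" and t0: "0 < t0"
  shows "\<exists>m M A k \<theta> \<eta> \<delta>. doubling_parameters B \<beta> gap t0 m M A k \<theta> \<eta> \<delta>"
proof -
  define m where "m = min (1/2) (\<beta> / 3)"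
  define A where "A = 4 * B"
  define k where "k = 2 * A / (gap * t0)"
  define \<theta> where "\<theta> = 1 / (2 * k)"
  define \<eta> where "\<eta> = min (min (1/4) (\<theta> / 2)) (\<beta> / 4)"
  have m: "0 < m" "m \<le> 1/2" "3 * m \<le> \<beta>" and A: "0 < A" and k: "0 < k"
    using \<beta> B gap t0 by (auto simp: m_def A_def k_def)
  have "k * t0 < exp (k * t0)"
    using exp_ge_add_one_self[of "k * t0"] by linarith
  then have "A * exp (- (k * t0)) < A / (k * t0)"
    using A k t0 by (simp add: exp_minus field_simps)
  also have "\<dots> = gap / 2"
    using A gap t0 by (simp add: k_def field_simps)
  finally have at_t0: "A * exp (- (k * t0)) < gap / 2" .
  have early: "2 * B \<le> A * exp (- (k * t))" if "t \<le> \<theta>" for t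
  proof -
    have "k * t \<le> 1/2"
      using that k by (simp add: \<theta>_def field_simps)
    then have "1/2 \<le> exp (- (k * t))"
      using exp_ge_add_one_self[of "- (k * t)"] by linarith
    then show ?thesis
      using A by (simp add: A_def)
  qed
  have \<eta>: "0 < \<eta>" "\<eta> \<le> 1/4" "2 * \<eta> \<le> \<theta>" "4 * \<eta> \<le> \<beta>"
    using k \<beta> by (auto simp: \<eta>_def \<theta>_def)
  have "2 * B < (2 * B / m\<^sup>2 + 1) * m\<^sup>2"
    using m by (simp add: field_simps)
  with m A k at_t0 early \<eta> B
  have "doubling_parameters B \<beta> gap t0 m (2 * B / m\<^sup>2 + 1) A k \<theta> \<eta> (\<eta>\<^sup>2 / (8 * B))"
    by unfold_locales (auto simp: add_nonneg_nonneg)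
  then show ?thesis by blast
qed

locale doubling = doubling_parameters +
  fixes u v :: "real^'i::finite \<Rightarrow> real \<Rightarrow> real" and c :: real and x0 :: "real^'i"
  assumes c_pos: "0 < c"
    and t0: "0 \<le> t0" "t0 \<le> 1" and x0_cone: "\<And>i. 0 \<le> x0 $ i \<and> x0 $ i \<le> c * t0"
    and gap: "0 < gap" "gap \<le> u x0 t0 - v x0 t0"
    and cont: "continuous_on (UNIV \<times> {0..1}) (\<lambda>(x, t). u x t)"
      "continuous_on (UNIV \<times> {0..1}) (\<lambda>(x, t). v x t)"
    and bound: "\<And>x t. (x, t) \<in> slab (c + 1) \<Longrightarrow> \<bar>u x t\<bar> \<le> B \<and> \<bar>v x t\<bar> \<le> B"
    and modulus: "\<And>x t y s. 0 \<le> t \<Longrightarrow> t \<le> 1 \<Longrightarrow> 0 \<le> s \<Longrightarrow> s \<le> 1 \<Longrightarrow> dist (x, t) (y, s) < \<beta> \<Longrightarrow>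
        \<bar>u x t - u y s\<bar> < gap / 8 \<and> \<bar>v x t - v y s\<bar> < gap / 8"
    and terminal: "\<And>y. (\<And>i. 0 \<le> y $ i \<and> y $ i \<le> c) \<Longrightarrow> u y 1 \<le> v y 1"
begin

definition doubled :: "(real^'i) \<times> real \<Rightarrow> (real^'i) \<times> real \<Rightarrow> real" where
  "doubled z w = u (fst z) (snd z) - v (fst w) (snd w) - (dist z w)\<^sup>2 / (2 * \<delta>)
     - A * exp (- (k * snd z)) - M * cone_penalty c (fst z) (snd z)"

lemma doubled_attains_max:
  obtains zh wh where "zh \<in> slab (c + 1)" "wh \<in> slab (c + 1)"
    and "\<And>z w. z \<in> slab (c + 1) \<Longrightarrow> w \<in> slab (c + 1) \<Longrightarrow> doubled z w \<le> doubled zh wh"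
proof -
  have sub: "slab (c + 1) \<subseteq> UNIV \<times> {0..1}"
    by (auto simp: slab_def)
  have "continuous_on (slab (c + 1)) (\<lambda>z. u (fst z) (snd z))"
       "continuous_on (slab (c + 1)) (\<lambda>z. v (fst z) (snd z))"
    using continuous_on_subset[OF cont(1) sub] continuous_on_subset[OF cont(2) sub]
    by (simp_all add: case_prod_beta)
  then have "continuous_on (slab (c + 1) \<times> slab (c + 1)) (\<lambda>p. u (fst (fst p)) (snd (fst p)))"
      "continuous_on (slab (c + 1) \<times> slab (c + 1)) (\<lambda>p. v (fst (snd p)) (snd (snd p)))"
    by (auto intro!: continuous_on_compose2[of "slab (c + 1)"] continuous_intros)
  then have cont_doubled: "continuous_on (slab (c + 1) \<times> slab (c + 1)) (\<lambda>p. doubled (fst p) (snd p))"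
    unfolding doubled_def cone_penalty_def hinge_sq_def using \<delta>(1)
    by (intro continuous_intros) auto
  have "((0, 0), (0, 0)) \<in> (slab (c + 1) \<times> slab (c + 1) :: (((real^'i) \<times> real) \<times> _) set)"
    using c_pos by (simp add: mem_slab)
  then have "slab (c + 1) \<times> slab (c + 1) \<noteq> ({} :: (((real^'i) \<times> real) \<times> _) set)"
    by (metis empty_iff)
  from continuous_attains_sup[OF compact_Times[OF compact_slab compact_slab] this cont_doubled]
  obtain p where "p \<in> slab (c + 1) \<times> slab (c + 1)"
    and "\<forall>q \<in> slab (c + 1) \<times> slab (c + 1). doubled (fst q) (snd q) \<le> doubled (fst p) (snd p)"
    by blast
  then show ?thesis
    by (intro that[of "fst p" "snd p"]) auto
qed

lemma penalties_nonneg: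
  "0 \<le> (dist z w)\<^sup>2 / (2 * \<delta>)" "0 \<le> A * exp (- (k * t))" "0 \<le> M * cone_penalty c x t"
  using \<delta>(1) barrier(1) by (simp_all add: M(1) cone_penalty_nonneg)

lemma doubled_le_diff: "doubled z w \<le> u (fst z) (snd z) - v (fst w) (snd w)"
  using penalties_nonneg(1)[of z w] penalties_nonneg(2)[of "snd z"] penalties_nonneg(3)[of "fst z" "snd z"]
  unfolding doubled_def by linarith

end

locale doubling_max = doubling +
  fixes xh yh th sh
  assumes max_in_slab: "(xh, th) \<in> slab (c + 1)" "(yh, sh) \<in> slab (c + 1)"
    and is_max: "\<And>z w. z \<in> slab (c + 1) \<Longrightarrow> w \<in> slab (c + 1) \<Longrightarrow> doubled z w \<le> doubled (xh, th) (yh, sh)"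
begin

lemma max_bounds: "\<bar>u xh th\<bar> \<le> B" "\<bar>v xh th\<bar> \<le> B" "\<bar>v yh sh\<bar> \<le> B"
  using bound max_in_slab by blast+

lemma max_times: "0 \<le> th" "th \<le> 1" "0 \<le> sh" "sh \<le> 1"
  using max_in_slab by (simp_all add: mem_slab)

lemma half_gap_lt_max: "gap / 2 < doubled (xh, th) (yh, sh)"
proof -
  have "\<bar>x0 $ i\<bar> \<le> c + 1" for i
  proof -
    have "c * t0 \<le> c"
      using t0 c_pos by (simp add: mult_left_le)
    with x0_cone[of i] show ?thesis by linarith
  qed
  then have "(x0, t0) \<in> slab (c + 1)"
    using t0 by (simp add: mem_slab)
  then have "doubled (x0, t0) (x0, t0) \<le> doubled (xh, th) (yh, sh)"
    by (intro is_max)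
  moreover have "doubled (x0, t0) (x0, t0) = u x0 t0 - v x0 t0 - A * exp (- (k * t0))"
    using x0_cone by (simp add: doubled_def cone_penalty_eq_0)
  ultimately show ?thesis
    using gap barrier(3) by linarith
qed

lemma max_le_bound:
  "doubled (xh, th) (yh, sh) + (dist (xh, th) (yh, sh))\<^sup>2 / (2 * \<delta>) + A * exp (- (k * th))
     + M * cone_penalty c xh th \<le> 2 * B"
  using max_bounds by (simp add: doubled_def)

lemma dist_max_lt: "dist (xh, th) (yh, sh) < \<eta>"
proof -
  have "doubled (xh, th) (xh, th) \<le> doubled (xh, th) (yh, sh)"
    using max_in_slab by (intro is_max)
  then have "(dist (xh, th) (yh, sh))\<^sup>2 / (2 * \<delta>) \<le> v xh th - v yh sh"
    by (simp add: doubled_def)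
  also have "\<dots> \<le> 2 * B"
    using max_bounds by linarith
  finally have "(dist (xh, th) (yh, sh))\<^sup>2 \<le> 4 * B * \<delta>"
    using \<delta>(1) by (simp add: field_simps)
  also have "\<dots> < \<eta>\<^sup>2"
    using \<delta>(2) \<eta>(1) zero_less_power[of \<eta> 2] by linarith
  finally show ?thesis
    using \<eta>(1) by (simp add: power_less_imp_less_base)
qed

lemma penalty_max_lt: "cone_penalty c xh th < m\<^sup>2"
proof -
  have "M * cone_penalty c xh th < M * m\<^sup>2"
    using max_le_bound half_gap_lt_max penalties_nonneg(1)[of "(xh, th)" "(yh, sh)"]
      penalties_nonneg(2)[of th] gap(1) M(2) by linarith
  then show ?thesis
    using M(1) by (simp add: mult_less_cancel_left)
qed

lemma max_x_range: "- 1/2 < xh $ i \<and> xh $ i < c + 1/2"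
proof -
  have "- m < xh $ i \<and> xh $ i < c * th + m"
    using penalty_max_lt m(1) by (intro cone_penalty_lt_sq_imp_near_cone) auto
  moreover have "c * th \<le> c"
    using c_pos max_times by (simp add: mult_left_le)
  ultimately show ?thesis
    using m(2) by linarith
qed

lemma max_times_pos: "\<theta> < th" "0 < sh"
proof -
  show "\<theta> < th"
  proof (rule ccontr)
    assume "\<not> \<theta> < th"
    then have "2 * B \<le> A * exp (- (k * th))"
      by (intro barrier(4)) simp
    then show False
      using max_le_bound half_gap_lt_max penalties_nonneg(1)[of "(xh, th)" "(yh, sh)"]
        penalties_nonneg(3)[of xh th] gap(1) by linarith
  qed
  then show "0 < sh"
    using dist_max_lt dist_snd_le[of "(xh, th)" "(yh, sh)"] \<eta>
    by (auto simp: dist_real_def)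
qed

lemma max_times_lt_1: "th < 1" "sh < 1"
proof -
  have "th < 1 \<and> sh < 1"
  proof (rule ccontr)
    assume "\<not> (th < 1 \<and> sh < 1)"
    moreover have "\<bar>th - sh\<bar> < \<eta>"
      using dist_max_lt dist_snd_le[of "(xh, th)" "(yh, sh)"] by (simp add: dist_real_def)
    ultimately have near_1: "1 - th < \<eta>" "1 - sh < \<eta>"
      using max_times \<eta>(1) by auto
    obtain p where p: "\<And>i. 0 \<le> p $ i \<and> p $ i \<le> c" and "(dist xh p)\<^sup>2 \<le> cone_penalty c xh th"
      using cone_penalty_ge_sq_dist_box c_pos max_times(2) by (metis less_imp_le)
    with penalty_max_lt have "(dist xh p)\<^sup>2 < m\<^sup>2"
      by linarith
    then have "dist xh p < m"
      using m(1) by (simp add: power_less_imp_less_base)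
    then have "dist (xh, th) (p, 1) < \<beta> - \<eta>"
      using dist_Pair_le_add[of xh th p 1] near_1 max_times m(3) \<eta>(4)
      by (simp add: dist_real_def)
    moreover have "dist (p, 1) (yh, sh) < \<beta>"
      using calculation dist_triangle[of "(p, 1)" "(yh, sh)" "(xh, th)"] dist_max_lt
      by (simp add: dist_commute)
    ultimately have "\<bar>u xh th - u p 1\<bar> < gap / 8" "\<bar>v p 1 - v yh sh\<bar> < gap / 8"
      using modulus max_times \<eta>(1) by auto
    moreover have "u p 1 \<le> v p 1"
      using p by (rule terminal)
    ultimately show False
      using doubled_le_diff[of "(xh, th)" "(yh, sh)"] half_gap_lt_max
      unfolding abs_less_iff by simp
  qed
  then show "th < 1" "sh < 1" by auto
qed

lemma max_local_in_first:
  assumes "0 < t" "t < 1" "dist (x, t) (xh, th) < 1/4"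
  shows "doubled (x, t) (yh, sh) \<le> doubled (xh, th) (yh, sh)"
proof -
  have "\<bar>x $ i\<bar> \<le> c + 1" for i
    using abs_nth_diff_le_dist_Pair[of x i xh t th] max_x_range[of i] assms c_pos
    unfolding abs_le_iff by linarith
  with assms have "(x, t) \<in> slab (c + 1)"
    by (simp add: mem_slab)
  then show ?thesis
    using max_in_slab by (intro is_max)
qed

lemma max_local_in_second:
  assumes "0 < s" "s < 1" "dist (y, s) (yh, sh) < 1/4"
  shows "doubled (xh, th) (y, s) \<le> doubled (xh, th) (yh, sh)"
proof -
  have "\<bar>y $ i\<bar> \<le> c + 1" for i
    using abs_nth_diff_le_dist_Pair[of y i yh s sh] abs_nth_diff_le_dist_Pair[of yh i xh sh th]
      dist_max_lt max_x_range[of i] \<eta>(2) assms c_pos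
    unfolding abs_le_iff dist_commute[of "(yh, sh)"] by linarith
  with assms have "(y, s) \<in> slab (c + 1)"
    by (simp add: mem_slab)
  then show ?thesis
    using max_in_slab by (intro is_max)
qed

end

lemma (in doubling) viscosity_contradiction:
  assumes H: "propagation_speed_le c H"
    and sub: "viscosity_subsolution H u" and super: "viscosity_supersolution H v"
  shows False
proof -
  obtain xh th yh sh where "(xh, th) \<in> slab (c + 1)" "(yh, sh) \<in> slab (c + 1)"
    and "\<And>z w. z \<in> slab (c + 1) \<Longrightarrow> w \<in> slab (c + 1) \<Longrightarrow> doubled z w \<le> doubled (xh, th) (yh, sh)"
    using doubled_attains_max by (metis prod.exhaust)
  then interpret doubling_max B \<beta> gap t0 m M A k \<theta> \<eta> \<delta> u v c x0 xh yh th sh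
    by unfold_locales
  have "0 < th"
    using max_times_pos(1) \<eta>(1,3) by linarith
  (* Up to terms constant in (x, t), resp. (y, s), local maximality of doubled in either argument is
     the touching condition for the corresponding test function. *)
  show False
    by (rule viscosity_doubling_contradiction[where r = "1/4" and xh = xh and yh = yh,
          OF H sub super \<delta>(1) barrier(2,1) M(1) \<open>0 < th\<close> max_times_lt_1(1) max_times_pos(2)
          max_times_lt_1(2)])
       (simp, (frule (2) max_local_in_first, simp add: doubled_def),
        (frule (2) max_local_in_second, simp add: doubled_def dist_commute))
qed

section \<open>Comparison and uniqueness on the cone\<close>

lemma continuous_on_bounded_on_slab:
  fixes u :: "real^'i::finite \<Rightarrow> real \<Rightarrow> real"
  assumes "continuous_on (UNIV \<times> {0..1}) (\<lambda>(x, t). u x t)"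
  obtains B where "0 < B" and "\<And>x t. (x, t) \<in> slab R \<Longrightarrow> \<bar>u x t\<bar> \<le> B"
proof -
  have "slab R \<subseteq> UNIV \<times> {0..1}"
    by (auto simp: slab_def)
  then have "bounded ((\<lambda>(x, t). u x t) ` slab R)"
    using assms by (intro compact_imp_bounded compact_continuous_image compact_slab)
       (rule continuous_on_subset)
  then obtain B where "\<forall>z\<in>slab R. \<bar>(\<lambda>(x, t). u x t) z\<bar> \<le> B"
    unfolding bounded_iff by auto
  then show ?thesis
    by (intro that[of "\<bar>B\<bar> + 1"]) fastforce+
qed

lemma uniformly_continuous_on_modulus:
  fixes u :: "real^'i::finite \<Rightarrow> real \<Rightarrow> real"
  assumes "uniformly_continuous_on (UNIV \<times> {0..1}) (\<lambda>(x, t). u x t)" and "0 < e"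
  obtains b where "0 < b" and "\<And>x t y s. 0 \<le> t \<Longrightarrow> t \<le> 1 \<Longrightarrow> 0 \<le> s \<Longrightarrow> s \<le> 1 \<Longrightarrow>
      dist (x, t) (y, s) < b \<Longrightarrow> \<bar>u x t - u y s\<bar> < e"
proof -
  obtain b where "0 < b" and b: "\<And>z z'. z \<in> UNIV \<times> {0..1} \<Longrightarrow> z' \<in> UNIV \<times> {0..1} \<Longrightarrow>
      dist z' z < b \<Longrightarrow> dist ((\<lambda>(x, t). u x t) z') ((\<lambda>(x, t). u x t) z) < e"
    using assms unfolding uniformly_continuous_on_def by metis
  show ?thesis
    using b[of "(y, s)" "(x, t)" for x t y s] by (intro that[OF \<open>0 < b\<close>]) (simp add: dist_real_def)
qed

lemma viscosity_comparison_on_cone: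
  fixes u v :: "real^'i::finite \<Rightarrow> real \<Rightarrow> real"
  assumes c: "0 < c" and H: "propagation_speed_le c H"
    and u_uc: "uniformly_continuous_on (UNIV \<times> {0..1}) (\<lambda>(x, t). u x t)"
    and v_uc: "uniformly_continuous_on (UNIV \<times> {0..1}) (\<lambda>(x, t). v x t)"
    and sub: "viscosity_subsolution H u" and super: "viscosity_supersolution H v"
    and terminal: "\<And>y. (\<And>i. 0 \<le> y $ i \<and> y $ i \<le> c) \<Longrightarrow> u y 1 \<le> v y 1"
    and t0: "0 < t0" "t0 < 1" and x0: "\<And>i. 0 \<le> x0 $ i \<and> x0 $ i \<le> c * t0"
  shows "u x0 t0 \<le> v x0 t0"
proof (rule ccontr)
  assume "\<not> u x0 t0 \<le> v x0 t0"
  define gap where "gap = u x0 t0 - v x0 t0"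
  then have gap: "0 < gap"
    using \<open>\<not> u x0 t0 \<le> v x0 t0\<close> by simp
  have cont: "continuous_on (UNIV \<times> {0..1}) (\<lambda>(x, t). u x t)"
      "continuous_on (UNIV \<times> {0..1}) (\<lambda>(x, t). v x t)"
    using u_uc v_uc by (simp_all add: uniformly_continuous_imp_continuous)
  obtain Bu Bv where "0 < Bu" "0 < Bv" and Bu: "\<And>x t. (x, t) \<in> slab (c + 1) \<Longrightarrow> \<bar>u x t\<bar> \<le> Bu"
    and Bv: "\<And>x t. (x, t) \<in> slab (c + 1) \<Longrightarrow> \<bar>v x t\<bar> \<le> Bv"
    by (metis continuous_on_bounded_on_slab cont)
  then have bound: "\<bar>u x t\<bar> \<le> Bu + Bv \<and> \<bar>v x t\<bar> \<le> Bu + Bv" if "(x, t) \<in> slab (c + 1)" for x t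
    using Bu[OF that] Bv[OF that] \<open>0 < Bu\<close> \<open>0 < Bv\<close> by linarith
  have "0 < gap / 8"
    using gap by simp
  then obtain bu bv where "0 < bu" "0 < bv"
    and bu: "\<And>x t y s. 0 \<le> t \<Longrightarrow> t \<le> 1 \<Longrightarrow> 0 \<le> s \<Longrightarrow> s \<le> 1 \<Longrightarrow>
      dist (x, t) (y, s) < bu \<Longrightarrow> \<bar>u x t - u y s\<bar> < gap / 8"
    and bv: "\<And>x t y s. 0 \<le> t \<Longrightarrow> t \<le> 1 \<Longrightarrow> 0 \<le> s \<Longrightarrow> s \<le> 1 \<Longrightarrow>
      dist (x, t) (y, s) < bv \<Longrightarrow> \<bar>v x t - v y s\<bar> < gap / 8"
    by (metis uniformly_continuous_on_modulus u_uc v_uc)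
  then have modulus: "\<bar>u x t - u y s\<bar> < gap / 8 \<and> \<bar>v x t - v y s\<bar> < gap / 8"
    if "0 \<le> t" "t \<le> 1" "0 \<le> s" "s \<le> 1" "dist (x, t) (y, s) < min bu bv" for x t y s
    using that by simp
  obtain m M A k \<theta> \<eta> \<delta> where "doubling_parameters (Bu + Bv) (min bu bv) gap t0 m M A k \<theta> \<eta> \<delta>"
    using doubling_parameters_exist[of "Bu + Bv" "min bu bv" gap t0]
      \<open>0 < Bu\<close> \<open>0 < Bv\<close> \<open>0 < bu\<close> \<open>0 < bv\<close> gap t0 by auto
  then interpret doubling "Bu + Bv" "min bu bv" gap t0 m M A k \<theta> \<eta> \<delta> u v c x0
    using c t0 x0 gap cont bound modulus terminal
    by (intro doubling.intro doubling_axioms.intro) (auto simp: gap_def)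
  show False
    using H sub super by (rule viscosity_contradiction)
qed

lemma viscosity_solution_continuous_in_time:
  assumes "viscosity_solution H G V"
  shows "continuous_on {0..1} (V x)"
proof -
  have "continuous_on (UNIV \<times> {0..1}) (\<lambda>(x, t). V x t)"
    using assms by (simp add: viscosity_solution_iff uniformly_continuous_imp_continuous)
  moreover have "continuous_on {0..1} (\<lambda>t. (x, t))"
    by (intro continuous_intros)
  ultimately have "continuous_on {0..1} (\<lambda>t. (\<lambda>(x, t). V x t) (x, t))"
    by (rule continuous_on_compose2) auto
  then show ?thesis
    by simp
qed

lemma viscosity_solution_le_on_cone:
  fixes V V' :: "real^'i::finite \<Rightarrow> real \<Rightarrow> real"
  assumes c: "0 < c" and H: "propagation_speed_le c H"
    and V: "viscosity_solution H G V" and V': "viscosity_solution H G' V'"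
    and G: "\<And>y. (\<And>i. 0 \<le> y $ i \<and> y $ i \<le> c) \<Longrightarrow> G y \<le> G' y"
    and t: "0 < t" "t < 1" and x: "\<And>i. 0 \<le> x $ i \<and> x $ i \<le> c * t"
  shows "V x t \<le> V' x t"
proof (rule viscosity_comparison_on_cone[OF c H _ _ _ _ _ t x])
  show "uniformly_continuous_on (UNIV \<times> {0..1}) (\<lambda>(x, t). V x t)" "viscosity_subsolution H V"
    "uniformly_continuous_on (UNIV \<times> {0..1}) (\<lambda>(x, t). V' x t)" "viscosity_supersolution H V'"
    using V V' by (simp_all add: viscosity_solution_iff)
  show "V y 1 \<le> V' y 1" if "\<And>i. 0 \<le> y $ i \<and> y $ i \<le> c" for y
    using V V' G[OF that] by (simp add: viscosity_solution_iff)
qed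

lemma viscosity_solutions_eq_at_0:
  assumes V: "viscosity_solution H G V" and V': "viscosity_solution H G' V'"
    and eq: "\<And>s. 0 < s \<Longrightarrow> s < 1 \<Longrightarrow> V x s = V' x s"
  shows "V x 0 = V' x 0"
proof -
  have "continuous_on (closure {0<..<1}) (\<lambda>s. V x s - V' x s)"
    using viscosity_solution_continuous_in_time[OF V] viscosity_solution_continuous_in_time[OF V']
    by (simp add: continuous_on_diff)
  moreover have "V x s - V' x s = 0" if "s \<in> {0<..<1}" for s
    using eq that by simp
  moreover have "(0::real) \<in> closure {0<..<1}"
    by simp
  ultimately have "V x 0 - V' x 0 = 0"
    by (rule continuous_constant_on_closure)
  then show ?thesis by simp
qed

lemma viscosity_solutions_eq_on_cone:
  fixes V V' :: "real^'i::finite \<Rightarrow> real \<Rightarrow> real"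
  assumes c: "0 < c" and H: "propagation_speed_le c H"
    and V: "viscosity_solution H G V" and V': "viscosity_solution H G' V'"
    and G: "\<And>y. (\<And>i. 0 \<le> y $ i \<and> y $ i \<le> c) \<Longrightarrow> G y = G' y"
    and t: "0 \<le> t" "t \<le> 1" and x: "\<And>i. 0 \<le> x $ i \<and> x $ i \<le> c * t"
  shows "V x t = V' x t"
proof -
  have inside: "V y s = V' y s" if "0 < s" "s < 1" "\<And>i. 0 \<le> y $ i \<and> y $ i \<le> c * s" for y s
    using G that
    by (intro antisym viscosity_solution_le_on_cone[OF c H V V'] viscosity_solution_le_on_cone[OF c H V' V])
       simp_all
  consider "t = 0" | "0 < t \<and> t < 1" | "t = 1"
    using t by linarith
  then show ?thesis
  proof cases
    case 1
    with x have "x = 0"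
      by (simp add: vec_eq_iff order_antisym)
    have "V 0 0 = V' 0 0"
      using inside[of _ 0] c by (intro viscosity_solutions_eq_at_0[OF V V']) simp
    with 1 \<open>x = 0\<close> show ?thesis by simp
  next
    case 2
    with x show ?thesis by (intro inside) auto
  next
    case 3
    with x V V' G show ?thesis by (simp add: viscosity_solution_iff)
  qed
qed

theorem mainTheorem7:
  fixes \<nu> :: "'i::finite \<Rightarrow> 'a::finite \<Rightarrow> 'o::finite \<Rightarrow> real"
    and \<epsilon> :: real
    and g' :: "real^'i \<Rightarrow> real"
    and V V' :: "real^'i \<Rightarrow> real \<Rightarrow> real"
  assumes m2: "CARD('i) \<ge> 2"
    and eps: "0 < \<epsilon>" "\<epsilon> < 1"
    and nu_dist: "\<forall>i a. \<nu> i a \<in> prob_simplex"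
    and nu_lb: "\<forall>i a x. \<nu> i a x \<ge> \<epsilon>"
    and V_sol: "viscosity_solution (Ham \<nu>) gpay V"
    and g'_bdd: "bounded (range g')"
    and g'_lip: "\<exists>L. L-lipschitz_on UNIV g'"
    and g'_supp: "compact (closure {x. g' x \<noteq> 0})"
    and g'_eq: "\<forall>x. (\<forall>i. 0 \<le> x $ i \<and> x $ i \<le> ln (1 / \<epsilon>)) \<longrightarrow> g' x = gpay x"
    and V'_sol: "viscosity_solution (Ham \<nu>) g' V'"
  shows "(\<forall>i. \<forall>w\<in>prob_simplex. \<forall>Q. (\<forall>a. Q a \<in> prob_simplex) \<longrightarrow>
            (\<Sum>a\<in>UNIV. w a * KL (Q a) (\<nu> i a)) \<le> ln (1 / \<epsilon>)) \<and>
         (\<forall>x t. 0 \<le> t \<and> t \<le> 1 \<and> (\<forall>i. 0 \<le> x $ i \<and> x $ i \<le> ln (1 / \<epsilon>) * t)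
            \<longrightarrow> V x t = V' x t)"
proof (intro conjI allI ballI impI)
  fix i :: 'i and w :: "'a \<Rightarrow> real" and Q :: "'a \<Rightarrow> 'o \<Rightarrow> real"
  assume "w \<in> prob_simplex" "\<forall>a. Q a \<in> prob_simplex"
  then show "(\<Sum>a\<in>UNIV. w a * KL (Q a) (\<nu> i a)) \<le> ln (1 / \<epsilon>)"
    by (rule weighted_KL_bounds(2)[OF nu_dist eps(1) nu_lb])
next
  fix x :: "real^'i" and t :: real
  assume "0 \<le> t \<and> t \<le> 1 \<and> (\<forall>i. 0 \<le> x $ i \<and> x $ i \<le> ln (1 / \<epsilon>) * t)"
  moreover have "0 < ln (1 / \<epsilon>)"
    using eps by simp
  ultimately show "V x t = V' x t"
    using propagation_speed_le_Ham[OF nu_dist eps(1) nu_lb] g'_eq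
    by (intro viscosity_solutions_eq_on_cone[OF _ _ V_sol V'_sol]) auto
qed

end
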